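(* Let $\alpha$ and $\beta$ be positive reals with $3\alpha < \beta$. Let $n$ be a positive integer, let $\sqrt{\log n/n} \ll p = p(n) \le 1$ and let $D \in \mathcal{D}(n,p)$. Then a.a.s. the following holds for every nonempty $S \subseteq [n]$ of size $s \le \alpha n$ and every set $T$ of $s$ ordered pairs (arcs) with both endpoints in $[n]\setminus S$ which span a digraph with maximum out-degree one and maximum in-degree one: there are fewer than $\beta s p^2 n$ pairs $((x,y),z) \in T \times S$ such that $(x,z) \in E(D)$ and $(z,y) \in E(D)$.
   Context: $\mathcal{D}(n,p)$ is the random digraph on $[n]$ where each ordered pair $(u,v)$, $u\ne v$, is an arc independently with probability $p$; $E(D)$ is its arc set. a.a.s. means with probability tending to $1$ as $n\to\infty$; $f \ll g$ means $f/g\to0$; $\log$ is natural. *)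

theory Defs
  imports "HOL-Probability.Probability"
begin

definition possible_arcs :: "nat \<Rightarrow> (nat \<times> nat) set" where
  "possible_arcs n = {(u, v). u \<in> {1..n} \<and> v \<in> {1..n} \<and> u \<noteq> v}"

definition random_digraph :: "nat \<Rightarrow> real \<Rightarrow> (nat \<times> nat) set pmf" where
  "random_digraph n p =
     map_pmf (\<lambda>f. {e. f e}) (Pi_pmf (possible_arcs n) False (\<lambda>_. bernoulli_pmf p))"

definition max_deg_one :: "(nat \<times> nat) set \<Rightarrow> bool" where
  "max_deg_one T \<longleftrightarrow>
     (\<forall>x. card {y. (x, y) \<in> T} \<le> 1) \<and> (\<forall>y. card {x. (x, y) \<in> T} \<le> 1)"

definition lemma4p3_property ::
    "real \<Rightarrow> real \<Rightarrow> nat \<Rightarrow> real \<Rightarrow> (nat \<times> nat) set \<Rightarrow> bool" where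
  "lemma4p3_property \<alpha> \<beta> n p E \<longleftrightarrow>
     (\<forall>S T. S \<subseteq> {1..n} \<and> S \<noteq> {} \<and> real (card S) \<le> \<alpha> * real n \<and>
        T \<subseteq> ({1..n} - S) \<times> ({1..n} - S) \<and> card T = card S \<and> max_deg_one T \<longrightarrow>
        real (card {((x, y), z) \<in> T \<times> S. (x, z) \<in> E \<and> (z, y) \<in> E})
          < \<beta> * real (card S) * p\<^sup>2 * real n)"

end

theory Submission
  imports Defs "HOL-Real_Asymp.Real_Asymp"
begin

text \<open>
  A first-moment argument. If the property fails for \<open>S\<close> and \<open>T\<close> with \<open>|S| = s\<close>, pick
  \<open>k = \<lceil>\<beta> s p\<^sup>2 n\<rceil>\<close> of the counted pairs \<open>((x, y), z)\<close>. Since \<open>T\<close> has in- and out-degree at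
  most one and avoids \<open>S\<close>, the \<open>2k\<close> arcs \<open>(x, z)\<close>, \<open>(z, y)\<close> are distinct, so they are all present
  with probability \<open>p^(2k)\<close>. There are at most \<open>n^s \<cdot> (n\<^sup>2)^s\<close> choices of \<open>(S, T)\<close> and
  \<open>C(s\<^sup>2, k) \<le> (e s\<^sup>2 / k)^k\<close> choices of the pairs, so size \<open>s\<close> contributes at most
  \<open>(n\<^sup>3 r^(\<beta> p\<^sup>2 n))^s\<close> with \<open>r = e \<alpha> / \<beta> < 1\<close>; this is where \<open>e < 3\<close> and \<open>3\<alpha> < \<beta>\<close> enter.
  Once \<open>p\<^sup>2 n\<close> is a large multiple of \<open>log n\<close>, the contribution is at most \<open>n^(-3s)\<close>, and
  summing over \<open>s \<ge> 1\<close> bounds the failure probability by \<open>2 / n\<^sup>3\<close>.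
\<close>

lemma finite_possible_arcs: "finite (possible_arcs n)"
proof -
  have "possible_arcs n \<subseteq> {1..n} \<times> {1..n}" by (auto simp: possible_arcs_def)
  thus ?thesis by (rule finite_subset) auto
qed

lemma prob_random_digraph_superset:
  assumes "A \<subseteq> possible_arcs n" "0 \<le> p" "p \<le> 1"
  shows "measure_pmf.prob (random_digraph n p) {E. A \<subseteq> E} = p ^ card A"
proof -
  have "measure_pmf.prob (random_digraph n p) {E. A \<subseteq> E}
     = measure_pmf.prob (Pi_pmf (possible_arcs n) False (\<lambda>_. bernoulli_pmf p))
         (Pi (possible_arcs n) (\<lambda>e. if e \<in> A then {True} else UNIV))"
    unfolding random_digraph_def measure_map_pmf
    by (rule arg_cong[where f="measure_pmf.prob _"])
       (use assms(1) in \<open>auto simp: Pi_iff, metis singletonD subsetD\<close>)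
  also have "\<dots> = (\<Prod>e\<in>possible_arcs n.
                     measure_pmf.prob (bernoulli_pmf p) (if e \<in> A then {True} else UNIV))"
    by (rule measure_Pi_pmf_Pi[OF finite_possible_arcs])
  also have "\<dots> = (\<Prod>e\<in>possible_arcs n. if e \<in> A then p else 1)"
    by (rule prod.cong) (use assms in \<open>auto simp: measure_pmf_single\<close>)
  also have "\<dots> = p ^ card A"
    using prod.If_cases[OF finite_possible_arcs, of "\<lambda>e. e \<in> A" "\<lambda>_. p" "\<lambda>_. 1"]
    by (simp add: Int_absorb1[OF assms(1)])
  finally show ?thesis .
qed

section \<open>The arcs of a family of paths of length two\<close>

lemma max_deg_one_out_unique:
  assumes "max_deg_one T" "finite T" "(x, y) \<in> T" "(x, y') \<in> T"
  shows "y = y'"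
proof -
  have "finite {y. (x, y) \<in> T}"
    by (rule finite_subset[of _ "snd ` T"]) (use assms(2) in force)+
  moreover have "card {y. (x, y) \<in> T} \<le> Suc 0"
    using assms(1) by (simp add: max_deg_one_def)
  ultimately show ?thesis using assms(3,4) card_le_Suc0_iff_eq by blast
qed

lemma max_deg_one_in_unique:
  assumes "max_deg_one T" "finite T" "(x, y) \<in> T" "(x', y) \<in> T"
  shows "x = x'"
proof -
  have "finite {x. (x, y) \<in> T}"
    by (rule finite_subset[of _ "fst ` T"]) (use assms(2) in force)+
  moreover have "card {x. (x, y) \<in> T} \<le> Suc 0"
    using assms(1) by (simp add: max_deg_one_def)
  ultimately show ?thesis using assms(3,4) card_le_Suc0_iff_eq by blast
qed

definition path_arcs :: "(('a \<times> 'a) \<times> 'a) set \<Rightarrow> ('a \<times> 'a) set" where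
  "path_arcs P = (\<lambda>((x, y), z). (x, z)) ` P \<union> (\<lambda>((x, y), z). (z, y)) ` P"

lemma path_arcs_subset_possible_arcs:
  assumes "S \<subseteq> {1..n}" "T \<subseteq> ({1..n} - S) \<times> ({1..n} - S)" "P \<subseteq> T \<times> S"
  shows "path_arcs P \<subseteq> possible_arcs n"
  using assms unfolding path_arcs_def possible_arcs_def by fastforce

lemma card_path_arcs:
  assumes "max_deg_one T" "finite T" "finite S" "T \<subseteq> (- S) \<times> (- S)" "P \<subseteq> T \<times> S"
  shows "card (path_arcs P) = 2 * card P"
proof -
  have "finite P" using assms(2,3,5) finite_subset by blast
  have "inj_on (\<lambda>((x, y), z). (x, z)) P"
    using assms(5) max_deg_one_out_unique[OF assms(1,2)] unfolding inj_on_def by fastforce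
  moreover have "inj_on (\<lambda>((x, y), z). (z, y)) P"
    using assms(5) max_deg_one_in_unique[OF assms(1,2)] unfolding inj_on_def by fastforce
  moreover have "(\<lambda>((x, y), z). (x, z)) ` P \<inter> (\<lambda>((x, y), z). (z, y)) ` P = {}"
    using assms(4,5) by fastforce
  ultimately show ?thesis
    unfolding path_arcs_def
    using \<open>finite P\<close> by (simp add: card_Un_disjoint card_image)
qed

section \<open>Counting potential witnesses\<close>

lemma finite_family_of_subsets: "finite A \<Longrightarrow> (\<And>X. X \<in> F \<Longrightarrow> X \<subseteq> A) \<Longrightarrow> finite F"
  by (metis Pow_iff finite_Pow_iff rev_finite_subset subsetI)

lemma card_family_of_k_subsets_le:
  assumes "finite A" "\<And>X. X \<in> F \<Longrightarrow> X \<subseteq> A \<and> card X = k"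
  shows "card F \<le> card A choose k"
proof -
  have "card F \<le> card {X. X \<subseteq> A \<and> card X = k}"
    by (rule card_mono) (use assms in \<open>auto simp: finite_family_of_subsets\<close>)
  thus ?thesis using n_subsets[OF assms(1)] by simp
qed

definition path_configurations ::
    "nat \<Rightarrow> nat \<Rightarrow> nat \<Rightarrow> (nat set \<times> (nat \<times> nat) set \<times> ((nat \<times> nat) \<times> nat) set) set" where
  "path_configurations n s k =
     (SIGMA S:{S. S \<subseteq> {1..n} \<and> card S = s}.
      SIGMA T:{T. T \<subseteq> ({1..n} - S) \<times> ({1..n} - S) \<and> card T = s \<and> max_deg_one T}.
        {P. P \<subseteq> T \<times> S \<and> card P = k})"

lemma prob_path_configuration:
  assumes "(S, T, P) \<in> path_configurations n s k" "0 \<le> p" "p \<le> 1"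
  shows "measure_pmf.prob (random_digraph n p) {E. path_arcs P \<subseteq> E} = (p\<^sup>2) ^ k"
proof -
  have S: "S \<subseteq> {1..n}" and T: "T \<subseteq> ({1..n} - S) \<times> ({1..n} - S)" "max_deg_one T"
    and P: "P \<subseteq> T \<times> S" "card P = k"
    using assms(1) by (auto simp: path_configurations_def)
  have "finite T" by (rule finite_subset[OF T(1)]) auto
  moreover have "finite S" using S finite_subset by blast
  moreover have "T \<subseteq> (- S) \<times> (- S)" using T(1) by blast
  ultimately have "card (path_arcs P) = 2 * k"
    using card_path_arcs[OF T(2)] P by simp
  thus ?thesis
    using prob_random_digraph_superset[OF path_arcs_subset_possible_arcs[OF S T(1) P(1)] assms(2,3)]
    by (simp add: power_mult)
qed

lemma finite_path_configurations: "finite (path_configurations n s k)"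
  unfolding path_configurations_def
  by (intro finite_SigmaI; rule finite_family_of_subsets[where A = "{1..n} \<times> {1..n}"]
      finite_family_of_subsets[where A = "{1..n}"] finite_family_of_subsets[where A = "({1..n} \<times> {1..n}) \<times> {1..n}"];
      fastforce)

lemma card_path_configurations_le:
  "card (path_configurations n s k) \<le> (n choose s) * ((n * n) choose s) * ((s * s) choose k)"
proof -
  define \<S> where "\<S> = {S. S \<subseteq> {1..n} \<and> card S = s}"
  define \<T> where "\<T> S = {T. T \<subseteq> ({1..n} - S) \<times> ({1..n} - S) \<and> card T = s \<and> max_deg_one T}"
    for S :: "nat set"
  define \<P> where "\<P> S T = {P. P \<subseteq> T \<times> S \<and> card P = k}"
    for S :: "nat set" and T :: "(nat \<times> nat) set"
  have fin_\<S>: "finite \<S>" by (rule finite_family_of_subsets[of "{1..n}"]) (auto simp: \<S>_def)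
  have fin_\<T>: "finite (\<T> S)" for S
    by (rule finite_family_of_subsets[of "{1..n} \<times> {1..n}"]) (auto simp: \<T>_def)
  have card_\<P>: "finite (\<P> S T) \<and> card (\<P> S T) \<le> (s * s) choose k" if "S \<in> \<S>" "T \<in> \<T> S" for S T
  proof -
    have "finite (T \<times> S)"
      by (rule finite_subset[of _ "({1..n} \<times> {1..n}) \<times> {1..n}"]) (use that in \<open>auto simp: \<S>_def \<T>_def\<close>)
    moreover have "card (T \<times> S) = s * s"
      using that by (simp add: \<S>_def \<T>_def card_cartesian_product)
    ultimately show ?thesis
      using card_family_of_k_subsets_le[of "T \<times> S" "\<P> S T" k] finite_family_of_subsets[of "T \<times> S" "\<P> S T"]
      by (auto simp: \<P>_def)
  qed
  have "card (path_configurations n s k) = (\<Sum>S\<in>\<S>. \<Sum>T\<in>\<T> S. card (\<P> S T))"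
    unfolding path_configurations_def \<S>_def[symmetric] \<T>_def[symmetric] \<P>_def[symmetric]
    using fin_\<S> fin_\<T> card_\<P> by (subst card_SigmaI) (auto intro!: finite_SigmaI sum.cong)
  also have "\<dots> \<le> (\<Sum>S\<in>\<S>. \<Sum>T\<in>\<T> S. (s * s) choose k)"
    using card_\<P> by (intro sum_mono) auto
  also have "\<dots> = (\<Sum>S\<in>\<S>. card (\<T> S)) * ((s * s) choose k)"
    by (simp add: sum_distrib_right)
  also have "\<dots> \<le> (\<Sum>S\<in>\<S>. (n * n) choose s) * ((s * s) choose k)"
    using card_family_of_k_subsets_le[of "{1..n} \<times> {1..n}" "\<T> _" s]
    by (intro mult_right_mono sum_mono) (fastforce simp: \<T>_def)+
  also have "\<dots> = (n choose s) * ((n * n) choose s) * ((s * s) choose k)"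
    using n_subsets[of "{1..n}" s] by (simp add: \<S>_def)
  finally show ?thesis .
qed

lemma not_property_subset_path_configurations:
  "{E. \<not> lemma4p3_property \<alpha> \<beta> n p E}
     \<subseteq> (\<Union>s\<in>{s\<in>{1..n}. real s \<le> \<alpha> * real n}.
          \<Union>(S, T, P)\<in>path_configurations n s (nat \<lceil>\<beta> * real s * p\<^sup>2 * real n\<rceil>).
            {E. path_arcs P \<subseteq> E})"
proof
  fix E assume "E \<in> {E. \<not> lemma4p3_property \<alpha> \<beta> n p E}"
  then obtain S T where S: "S \<subseteq> {1..n}" "S \<noteq> {}" "real (card S) \<le> \<alpha> * real n"
    and T: "T \<subseteq> ({1..n} - S) \<times> ({1..n} - S)" "card T = card S" "max_deg_one T"
    and many: "\<beta> * real (card S) * p\<^sup>2 * real n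
                 \<le> real (card {((x, y), z) \<in> T \<times> S. (x, z) \<in> E \<and> (z, y) \<in> E})"
    unfolding lemma4p3_property_def by (auto simp: not_less)
  define s where "s = card S"
  have "finite S" using S(1) finite_subset by blast
  hence "s \<in> {s\<in>{1..n}. real s \<le> \<alpha> * real n}"
    using S card_mono[OF _ S(1)] by (auto simp: s_def Suc_le_eq card_gt_0_iff)
  moreover have "nat \<lceil>\<beta> * real s * p\<^sup>2 * real n\<rceil>
                  \<le> card {((x, y), z) \<in> T \<times> S. (x, z) \<in> E \<and> (z, y) \<in> E}"
    using many by (simp add: s_def nat_le_iff ceiling_le_iff)
  then obtain P where P: "P \<subseteq> {((x, y), z) \<in> T \<times> S. (x, z) \<in> E \<and> (z, y) \<in> E}"
    "card P = nat \<lceil>\<beta> * real s * p\<^sup>2 * real n\<rceil>"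
    by (meson obtain_subset_with_card_n)
  moreover have "(S, T, P) \<in> path_configurations n s (nat \<lceil>\<beta> * real s * p\<^sup>2 * real n\<rceil>)"
    using S T P by (auto simp: path_configurations_def s_def)
  moreover have "path_arcs P \<subseteq> E" using P(1) by (auto simp: path_arcs_def)
  ultimately show "E \<in> (\<Union>s\<in>{s\<in>{1..n}. real s \<le> \<alpha> * real n}.
      \<Union>(S, T, P)\<in>path_configurations n s (nat \<lceil>\<beta> * real s * p\<^sup>2 * real n\<rceil>).
        {E. path_arcs P \<subseteq> E})"
    by blast
qed

section \<open>Binomial estimates\<close>

lemma power_div_fact_le_exp:
  fixes x :: real
  assumes "0 \<le> x"
  shows "x ^ k / fact k \<le> exp x"
proof -
  have "(\<Sum>j\<in>{k}. x ^ j /\<^sub>R fact j) \<le> exp x"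
    using sum_le_suminf[of "\<lambda>j. x ^ j /\<^sub>R fact j" "{k}"] exp_converges[of x] assms
    by (simp add: sums_iff)
  thus ?thesis by (simp add: divide_inverse mult.commute)
qed

lemma power_div_exp_le_fact: "(real k / exp 1) ^ k \<le> fact k"
proof -
  have "real k ^ k / fact k \<le> exp 1 ^ k"
    using power_div_fact_le_exp[of "real k" k] exp_of_nat_mult[of k "1::real"] by simp
  thus ?thesis by (simp add: power_divide divide_le_eq mult.commute)
qed

lemma binomial_mult_power_le:
  fixes q :: real
  assumes "0 \<le> q"
  shows "real (N choose k) * q ^ k \<le> (real N * q * exp 1 / real k) ^ k"
proof -
  have "real (N choose k) * fact k \<le> real N ^ k"
    by (metis binomial_fact_pow of_nat_fact of_nat_le_iff of_nat_mult of_nat_power)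
  hence "real (N choose k) * (real k / exp 1) ^ k \<le> real N ^ k"
    using power_div_exp_le_fact[of k] by (meson mult_left_mono of_nat_0_le_iff order_trans)
  hence "real (N choose k) \<le> real N ^ k / (real k / exp 1) ^ k"
    by (cases "k = 0") (simp_all add: le_divide_eq)
  hence "real (N choose k) * q ^ k \<le> real N ^ k / (real k / exp 1) ^ k * q ^ k"
    by (rule mult_right_mono) (use assms in auto)
  also have "\<dots> = (real N * q * exp 1 / real k) ^ k"
    by (simp add: power_divide power_mult_distrib)
  finally show ?thesis .
qed

lemma binomial_square_mult_power_le:
  fixes q \<alpha> \<beta> :: real
  assumes q: "0 < q" and \<beta>: "0 < \<beta>" "exp 1 * \<alpha> < \<beta>"
    and s: "1 \<le> s" "real s \<le> \<alpha> * real n"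
    and k: "k = nat \<lceil>\<beta> * real s * q * real n\<rceil>"
  shows "real ((s * s) choose k) * q ^ k \<le> ((exp 1 * \<alpha> / \<beta>) powr (\<beta> * q * real n)) ^ s"
proof -
  define r where "r = exp 1 * \<alpha> / \<beta>"
  define K where "K = \<beta> * real s * q * real n"
  have "1 \<le> real s" using s by simp
  hence "0 < \<alpha> * real n" using s by linarith
  hence \<alpha>: "0 < \<alpha>" and n: "0 < real n" by (auto simp: zero_less_mult_iff)
  have r: "0 < r" "r < 1" using \<alpha> \<beta> by (simp_all add: r_def)
  have K: "0 < K" using q \<beta> \<open>1 \<le> real s\<close> n by (simp add: K_def)
  hence "K \<le> real k" unfolding k K_def[symmetric] by linarith
  have "real ((s * s) choose k) * q ^ k \<le> (real (s * s) * q * exp 1 / real k) ^ k"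
    by (rule binomial_mult_power_le) (use q in simp)
  also have "\<dots> \<le> r ^ k"
  proof (rule power_mono)
    have "real (s * s) * q * exp 1 / real k \<le> real (s * s) * q * exp 1 / K"
      by (rule divide_left_mono) (use K \<open>K \<le> real k\<close> q in auto)
    also have "\<dots> = exp 1 * real s / (\<beta> * real n)"
      unfolding K_def using q s by (simp add: field_simps)
    also have "\<dots> \<le> exp 1 * (\<alpha> * real n) / (\<beta> * real n)"
      by (rule divide_right_mono) (use s \<beta> n in auto)
    also have "\<dots> = r" using n by (simp add: r_def)
    finally show "real (s * s) * q * exp 1 / real k \<le> r" .
  qed (use q in simp)
  also have "\<dots> = r powr real k" using r by (simp add: powr_realpow)
  also have "\<dots> \<le> r powr K" using \<open>K \<le> real k\<close> r by (simp add: powr_mono')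
  also have "\<dots> = (r powr (\<beta> * q * real n)) ^ s"
    unfolding K_def using r by (simp add: powr_powr[symmetric] powr_realpow[symmetric] mult_ac)
  finally show ?thesis by (simp add: r_def)
qed

lemma binomial_le_power: "n choose k \<le> n ^ k"
  using binomial_fact_pow[of n k]
  by (metis One_nat_def dual_order.trans fact_ge_Suc_0_nat mult.right_neutral mult_le_mono2)

section \<open>The union bound\<close>

lemma card_path_configurations_mult_power_le:
  fixes p \<alpha> \<beta> :: real
  assumes p: "0 < p" and \<beta>: "0 < \<beta>" "exp 1 * \<alpha> < \<beta>" and s: "1 \<le> s" "real s \<le> \<alpha> * real n"
    and k: "k = nat \<lceil>\<beta> * real s * p\<^sup>2 * real n\<rceil>"
  shows "real (card (path_configurations n s k)) * (p\<^sup>2) ^ k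
           \<le> (real n ^ 3 * (exp 1 * \<alpha> / \<beta>) powr (\<beta> * p\<^sup>2 * real n)) ^ s"
proof -
  let ?q = "p\<^sup>2" and ?R = "(exp 1 * \<alpha> / \<beta>) powr (\<beta> * p\<^sup>2 * real n)"
  have "real (card (path_configurations n s k)) * ?q ^ k
          \<le> real ((n choose s) * ((n * n) choose s) * ((s * s) choose k)) * ?q ^ k"
    using of_nat_mono[OF card_path_configurations_le[of n s k]]
    by (intro mult_right_mono) simp_all
  also have "\<dots> = real (n choose s) * real ((n * n) choose s) * (real ((s * s) choose k) * ?q ^ k)"
    by simp
  also have "\<dots> \<le> real n ^ s * (real n ^ 2) ^ s * ?R ^ s"
  proof (intro mult_mono)
    show "real (n choose s) \<le> real n ^ s"
      by (metis binomial_le_power of_nat_le_iff of_nat_power)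
    show "real ((n * n) choose s) \<le> (real n ^ 2) ^ s"
      by (metis binomial_le_power of_nat_le_iff of_nat_mult of_nat_power power2_eq_square)
    show "real ((s * s) choose k) * ?q ^ k \<le> ?R ^ s"
      using binomial_square_mult_power_le[OF _ \<beta> s, of ?q] p k by simp
  qed simp_all
  also have "\<dots> = (real n ^ 3 * ?R) ^ s"
    by (simp add: power_mult_distrib flip: power_add power_mult)
  finally show ?thesis .
qed

lemma prob_not_property_le_sum:
  fixes \<alpha> \<beta> p :: real
  assumes p: "0 < p" "p \<le> 1" and \<beta>: "0 < \<beta>" "exp 1 * \<alpha> < \<beta>"
  shows "measure_pmf.prob (random_digraph n p) {E. \<not> lemma4p3_property \<alpha> \<beta> n p E}
         \<le> (\<Sum>s\<in>{1..n}. (real n ^ 3 * (exp 1 * \<alpha> / \<beta>) powr (\<beta> * p\<^sup>2 * real n)) ^ s)"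
proof -
  define k where "k s = nat \<lceil>\<beta> * real s * p\<^sup>2 * real n\<rceil>" for s :: nat
  define sizes where "sizes = {s\<in>{1..n}. real s \<le> \<alpha> * real n}"
  define W where "W s = (\<Union>(S, T, P)\<in>path_configurations n s (k s). {E. path_arcs P \<subseteq> E})"
    for s :: nat
  let ?M = "random_digraph n p"
  have "measure_pmf.prob ?M {E. \<not> lemma4p3_property \<alpha> \<beta> n p E}
          \<le> measure_pmf.prob ?M (\<Union>s\<in>sizes. W s)"
    using not_property_subset_path_configurations
    unfolding W_def k_def sizes_def by (intro measure_pmf.finite_measure_mono) auto
  also have "\<dots> \<le> (\<Sum>s\<in>sizes. measure_pmf.prob ?M (W s))"
    by (rule measure_pmf.finite_measure_subadditive_finite) (auto simp: sizes_def)
  also have "\<dots> \<le> (\<Sum>s\<in>sizes. (real n ^ 3 * (exp 1 * \<alpha> / \<beta>) powr (\<beta> * p\<^sup>2 * real n)) ^ s)"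
  proof (rule sum_mono)
    fix s assume "s \<in> sizes"
    hence s: "1 \<le> s" "real s \<le> \<alpha> * real n" by (auto simp: sizes_def)
    have "measure_pmf.prob ?M (W s)
           \<le> (\<Sum>(S, T, P)\<in>path_configurations n s (k s). measure_pmf.prob ?M {E. path_arcs P \<subseteq> E})"
      unfolding W_def split_beta
      by (rule measure_pmf.finite_measure_subadditive_finite[OF finite_path_configurations]) auto
    also have "\<dots> = (\<Sum>c\<in>path_configurations n s (k s). (p\<^sup>2) ^ k s)"
      using prob_path_configuration p by (intro sum.cong) auto
    also have "\<dots> \<le> (real n ^ 3 * (exp 1 * \<alpha> / \<beta>) powr (\<beta> * p\<^sup>2 * real n)) ^ s"
      using card_path_configurations_mult_power_le[OF p(1) \<beta> s] by (simp add: k_def)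
    finally show "measure_pmf.prob ?M (W s)
                    \<le> (real n ^ 3 * (exp 1 * \<alpha> / \<beta>) powr (\<beta> * p\<^sup>2 * real n)) ^ s" .
  qed
  also have "\<dots> \<le> (\<Sum>s\<in>{1..n}. (real n ^ 3 * (exp 1 * \<alpha> / \<beta>) powr (\<beta> * p\<^sup>2 * real n)) ^ s)"
    by (rule sum_mono2) (auto simp: sizes_def)
  finally show ?thesis .
qed

lemma sum_power_le_double:
  fixes y :: real
  assumes "0 \<le> y" "2 * y \<le> 1"
  shows "(\<Sum>s\<in>{1..n}. y ^ s) \<le> 2 * y"
proof -
  have "(\<Sum>s\<in>{1..n}. y ^ s) \<le> 2 * y - 2 * y ^ (n + 1)"
  proof (induction n)
    case (Suc n)
    have "2 * y ^ (n + 2) \<le> y ^ (n + 1)"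
      using assms mult_right_mono[of "2 * y" 1 "y ^ (n + 1)"] by (simp add: mult_ac)
    thus ?case using Suc by simp
  qed simp
  thus ?thesis using zero_le_power[OF assms(1), of "n + 1"] by linarith
qed

lemma cube_mult_powr_le_inverse_cube:
  fixes r x :: real
  assumes r: "0 < r" and n: "1 \<le> n" and ln_n: "ln (real n) \<le> - ln r / 6 * x"
  shows "real n ^ 3 * r powr x \<le> 1 / real n ^ 3"
proof -
  have "r powr x = exp (x * ln r)" using r by (simp add: powr_def)
  also have "\<dots> \<le> exp (- (6 * ln (real n)))" using ln_n by (simp add: field_simps)
  also have "\<dots> = 1 / real n ^ 6"
    using exp_of_nat_mult[of 6 "ln (real n)"] n by (simp add: exp_minus inverse_eq_divide)
  finally have "real n ^ 3 * r powr x \<le> real n ^ 3 * (1 / real n ^ 6)"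
    by (rule mult_left_mono) simp
  also have "\<dots> = 1 / real n ^ 3" using n by (simp add: field_simps)
  finally show ?thesis .
qed

lemma prob_property_ge_one_minus_inverse_cube:
  fixes \<alpha> \<beta> p :: real
  assumes p: "0 < p" "p \<le> 1" and \<alpha>: "0 < \<alpha>" and \<beta>: "0 < \<beta>" "exp 1 * \<alpha> < \<beta>" and n: "2 \<le> n"
    and ln_n: "ln (real n) \<le> - \<beta> * ln (exp 1 * \<alpha> / \<beta>) / 6 * (p\<^sup>2 * real n)"
  shows "1 - 2 / real n ^ 3
           \<le> measure_pmf.prob (random_digraph n p) {E. lemma4p3_property \<alpha> \<beta> n p E}"
proof -
  define y where "y = real n ^ 3 * (exp 1 * \<alpha> / \<beta>) powr (\<beta> * p\<^sup>2 * real n)"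
  have "y \<le> 1 / real n ^ 3"
    unfolding y_def using \<alpha> \<beta> n ln_n by (intro cube_mult_powr_le_inverse_cube) (simp_all add: mult_ac)
  moreover have "2 \<le> n ^ 3"
    using n self_le_power[of n 3] by simp
  hence "2 \<le> real n ^ 3"
    by (metis of_nat_le_iff of_nat_numeral of_nat_power)
  hence "1 / real n ^ 3 \<le> 1 / 2" by (simp add: divide_le_eq)
  moreover have "0 \<le> y" by (simp add: y_def)
  ultimately have "measure_pmf.prob (random_digraph n p) {E. \<not> lemma4p3_property \<alpha> \<beta> n p E}
                     \<le> 2 / real n ^ 3"
    using prob_not_property_le_sum[OF p \<beta>, of n] sum_power_le_double[of y n]
    unfolding y_def[symmetric] by linarith
  moreover have "{E. lemma4p3_property \<alpha> \<beta> n p E}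
                   = space (random_digraph n p) - {E. \<not> lemma4p3_property \<alpha> \<beta> n p E}"
    by auto
  ultimately show ?thesis
    using measure_pmf.prob_compl[of "{E. \<not> lemma4p3_property \<alpha> \<beta> n p E}" "random_digraph n p"]
    by simp
qed

theorem lemma4p3:
  fixes \<alpha> \<beta> :: real and p :: "nat \<Rightarrow> real"
  assumes "0 < \<alpha>" and "0 < \<beta>" and "3 * \<alpha> < \<beta>"
    and "\<forall>n. p n \<le> 1"
    and "eventually (\<lambda>n. 0 < p n) sequentially"
    and "(\<lambda>n. sqrt (ln (real n) / real n) / p n) \<longlonglongrightarrow> 0"
  shows "(\<lambda>n. measure_pmf.prob (random_digraph n (p n))
            {E. lemma4p3_property \<alpha> \<beta> n (p n) E}) \<longlonglongrightarrow> 1"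
proof -
  have "exp 1 * \<alpha> < 3 * \<alpha>" using e_less_272 assms(1) by simp
  hence \<beta>: "exp 1 * \<alpha> < \<beta>" using assms(3) by linarith
  define c where "c = - \<beta> * ln (exp 1 * \<alpha> / \<beta>) / 6"
  have "0 < c" using assms(1,2) \<beta> by (simp add: c_def mult_pos_neg)
  hence "eventually (\<lambda>n. (sqrt (ln (real n) / real n) / p n)\<^sup>2 < c) sequentially"
    using order_tendstoD(2)[OF tendsto_power[OF assms(6), of 2]] by simp
  hence lower: "eventually (\<lambda>n. 1 - 2 / real n ^ 3
           \<le> measure_pmf.prob (random_digraph n (p n)) {E. lemma4p3_property \<alpha> \<beta> n (p n) E})
         sequentially"
    using assms(5) eventually_ge_at_top[of 2]
  proof eventually_elim
    case (elim n)
    hence "ln (real n) / (real n * (p n)\<^sup>2) < c" by (simp add: power_divide)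
    hence "ln (real n) \<le> c * ((p n)\<^sup>2 * real n)"
      using elim by (simp add: divide_less_eq mult_ac)
    thus ?case
      using prob_property_ge_one_minus_inverse_cube[OF _ _ assms(1,2) \<beta>] elim assms(4) by (simp add: c_def)
  qed
  have "(\<lambda>n. 1 - 2 / real n ^ 3) \<longlonglongrightarrow> 1" by real_asymp
  thus ?thesis
    by (intro tendsto_sandwich[OF lower _ _ tendsto_const]) (simp_all add: measure_pmf.prob_le_1)
qed

end
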